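(* Let $G$ be a finite subset of $\mathbb{N}^2$ that has at least one connected h-bridge. If $G$ contains a connected component $C$ (of the full grid graph of $G$) such that $C\cap(\mathbb{N}\times\{t_G\})\neq\emptyset$ and $C\cap(\{l_G\}\times\mathbb{N})=\emptyset$, then there exists a point $\vec x_N\in G\setminus C$ such that $N(\vec x_N)\notin G$ and $\vec x_N\notin\mathbb{N}\times\{t_G\}$.
   Context: The full grid graph of $V\subseteq\mathbb{Z}^2$ has vertex set $V$ and an edge between $\vec x,\vec y$ iff $\|\vec x-\vec y\|=1$; paths and connected components are taken in this graph. For a finite $S\subseteq\mathbb{Z}^2$ let $l_S=\min_{(x,y)\in S}x$, $r_S=\max_{(x,y)\in S}x$, $b_S=\min_{(x,y)\in S}y$, $t_S=\max_{(x,y)\in S}y$. An h-bridge of $S$ is a subset of $S$ of the form $\{(l_S,y),(r_S,y)\}$; a v-bridge is a subset of $S$ of the form $\{(x,b_S),(x,t_S)\}$. A bridge is connected if there is a simple path in (the full grid graph of) $S$ connecting its two points. Directions: $N(x,y)=(x,y+1)$, $E(x,y)=(x+1,y)$, $S(x,y)=(x,y-1)$, $W(x,y)=(x-1,y)$. *)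

theory Defs
  imports Main
begin

type_synonym pt = "nat \<times> nat"

definition adj :: "pt \<Rightarrow> pt \<Rightarrow> bool" where
  "adj p q \<longleftrightarrow> (fst p = fst q \<and> (snd p = snd q + 1 \<or> snd q = snd p + 1))
               \<or> (snd p = snd q \<and> (fst p = fst q + 1 \<or> fst q = fst p + 1))"

definition lS :: "pt set \<Rightarrow> nat" where "lS S = Min (fst ` S)"
definition rS :: "pt set \<Rightarrow> nat" where "rS S = Max (fst ` S)"
definition bS :: "pt set \<Rightarrow> nat" where "bS S = Min (snd ` S)"
definition tS :: "pt set \<Rightarrow> nat" where "tS S = Max (snd ` S)"

definition northN :: "pt \<Rightarrow> pt" where "northN p = (fst p, snd p + 1)"

definition simple_path_in :: "pt set \<Rightarrow> pt list \<Rightarrow> pt \<Rightarrow> pt \<Rightarrow> bool" where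
  "simple_path_in S ps p q \<longleftrightarrow> ps \<noteq> [] \<and> hd ps = p \<and> last ps = q \<and> distinct ps
     \<and> set ps \<subseteq> S \<and> (\<forall>i. Suc i < length ps \<longrightarrow> adj (ps ! i) (ps ! Suc i))"

definition connected_in :: "pt set \<Rightarrow> pt \<Rightarrow> pt \<Rightarrow> bool" where
  "connected_in S p q \<longleftrightarrow> (\<exists>ps. simple_path_in S ps p q)"

definition has_connected_hbridge :: "pt set \<Rightarrow> bool" where
  "has_connected_hbridge S \<longleftrightarrow> (\<exists>y. (lS S, y) \<in> S \<and> (rS S, y) \<in> S
      \<and> connected_in S (lS S, y) (rS S, y))"

definition is_component :: "pt set \<Rightarrow> pt set \<Rightarrow> bool" where
  "is_component S C \<longleftrightarrow> (\<exists>p\<in>S. C = {q. connected_in S p q})"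

end

theory Submission imports Defs begin

text \<open>The horizontal path of a connected h-bridge runs from the left to the right column, so it
  meets the column of a top-row point \<open>c \<in> C\<close>. The whole path lies in one component, which is not
  \<open>C\<close> since it touches the left column. If every point outside \<open>C\<close> below the top row had its northern
  neighbour in \<open>G\<close>, one could walk north from the crossing point inside that component up to \<open>c\<close>.\<close>

definition grid_step :: "pt set \<Rightarrow> pt \<Rightarrow> pt \<Rightarrow> bool" where
  "grid_step G u v \<longleftrightarrow> u \<in> G \<and> v \<in> G \<and> adj u v"

lemma adj_sym: "adj u v \<Longrightarrow> adj v u"
  by (auto simp: adj_def)

lemma grid_step_rtranclp_sym:
  assumes "(grid_step G)\<^sup>*\<^sup>* u v"
  shows "(grid_step G)\<^sup>*\<^sup>* v u"
  using assms
proof (induction rule: rtranclp_induct)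
  case (step y z)
  then have "grid_step G z y" by (auto simp: grid_step_def adj_sym)
  from this step.IH show ?case by (rule converse_rtranclp_into_rtranclp)
qed simp

lemma grid_step_rtranclp_in:
  "(grid_step G)\<^sup>*\<^sup>* u v \<Longrightarrow> u \<in> G \<Longrightarrow> v \<in> G"
  by (induction rule: rtranclp_induct) (auto simp: grid_step_def)

lemma adj_chain_reaches:
  assumes "set ps \<subseteq> G" "\<forall>i. Suc i < length ps \<longrightarrow> adj (ps ! i) (ps ! Suc i)" "z \<in> set ps"
  shows "(grid_step G)\<^sup>*\<^sup>* (hd ps) z"
  using assms
proof (induction ps)
  case (Cons a ps)
  show ?case
  proof (cases "z = a")
    case False
    then obtain b qs where ps: "ps = b # qs" using Cons.prems(3) by (cases ps) auto
    have "adj a b" using Cons.prems(2) ps by force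
    then have "grid_step G a b" using Cons.prems(1) ps by (simp add: grid_step_def)
    moreover have "(grid_step G)\<^sup>*\<^sup>* b z"
      using Cons.IH Cons.prems False ps by fastforce
    ultimately show ?thesis by (simp add: converse_rtranclp_into_rtranclp)
  qed simp
qed simp

lemma connected_in_iff_rtranclp:
  "connected_in G p q \<longleftrightarrow> p \<in> G \<and> (grid_step G)\<^sup>*\<^sup>* p q"
proof
  assume "connected_in G p q"
  then obtain ps where "simple_path_in G ps p q" by (auto simp: connected_in_def)
  then show "p \<in> G \<and> (grid_step G)\<^sup>*\<^sup>* p q"
    unfolding simple_path_in_def using adj_chain_reaches by (metis hd_in_set last_in_set subsetD)
next
  assume "p \<in> G \<and> (grid_step G)\<^sup>*\<^sup>* p q"
  then have "(grid_step G)\<^sup>*\<^sup>* p q" and "p \<in> G" by simp_all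
  then show "connected_in G p q"
  proof (induction rule: rtranclp_induct)
    case base
    then have "simple_path_in G [p] p p" by (simp add: simple_path_in_def)
    then show ?case by (auto simp: connected_in_def)
  next
    case (step u v)
    then obtain ps where ps: "simple_path_in G ps p u" by (auto simp: connected_in_def)
    show ?case
    proof (cases "v \<in> set ps")
      case True
      then obtain i where i: "i < length ps" "ps ! i = v" by (meson in_set_conv_nth)
      have "simple_path_in G (take (Suc i) ps) p v"
        using ps i unfolding simple_path_in_def
        by (auto simp: hd_take last_conv_nth dest: in_set_takeD)
      then show ?thesis by (auto simp: connected_in_def)
    next
      case False
      have "simple_path_in G (ps @ [v]) p v"
        using ps False step(2) unfolding simple_path_in_def grid_step_def
        by (auto simp: nth_append last_conv_nth less_Suc_eq) (metis One_nat_def diff_Suc_1)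
      then show ?thesis by (auto simp: connected_in_def)
    qed
  qed
qed

lemma component_reach_closed:
  assumes "is_component G C" "z \<in> C" "(grid_step G)\<^sup>*\<^sup>* z w"
  shows "w \<in> C"
proof -
  obtain p where "p \<in> G" and C: "C = {q. connected_in G p q}"
    using assms(1) by (auto simp: is_component_def)
  with assms(2,3) show ?thesis
    by (auto simp: connected_in_iff_rtranclp intro: rtranclp_trans)
qed

lemma adj_chain_crosses_column:
  assumes "ps \<noteq> []" "\<forall>i. Suc i < length ps \<longrightarrow> adj (ps ! i) (ps ! Suc i)"
    and "fst (hd ps) \<le> a" "a \<le> fst (last ps)"
  shows "\<exists>q\<in>set ps. fst q = a"
  using assms
proof (induction ps)
  case (Cons x ps)
  show ?case
  proof (cases "fst x = a")
    case False
    then obtain b qs where ps: "ps = b # qs" using Cons.prems(3,4) by (cases ps) auto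
    have "adj x b" using Cons.prems(2) ps by force
    \<comment> \<open>a grid step changes the column by at most one\<close>
    then have "fst b \<le> a" using False Cons.prems(3) by (auto simp: adj_def)
    then have "\<exists>q\<in>set ps. fst q = a" using Cons.IH Cons.prems ps by fastforce
    then show ?thesis by simp
  qed simp
qed simp

lemma climb_column:
  assumes s: "s \<in> G"
    and north: "\<And>z. (grid_step G)\<^sup>*\<^sup>* s z \<Longrightarrow> snd z < t \<Longrightarrow> northN z \<in> G"
    and start: "(grid_step G)\<^sup>*\<^sup>* s (a, y0)" and "y0 \<le> t"
  shows "(grid_step G)\<^sup>*\<^sup>* s (a, t)"
  using \<open>y0 \<le> t\<close>
proof (induction t rule: dec_induct)
  case (step y)
  then have "(a, y) \<in> G" and "(a, Suc y) \<in> G"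
    using grid_step_rtranclp_in[OF _ s] north[of "(a, y)"] by (auto simp: northN_def)
  then have "grid_step G (a, y) (a, Suc y)" by (simp add: grid_step_def adj_def)
  with step.IH show ?case by (rule rtranclp.rtrancl_into_rtrancl)
qed (rule start)

theorem mainTheorem3:
  fixes G C :: "(nat \<times> nat) set"
  assumes "finite G"
    and "has_connected_hbridge G"
    and "is_component G C"
    and "C \<inter> {p. snd p = tS G} \<noteq> {}"
    and "C \<inter> {p. fst p = lS G} = {}"
  shows "\<exists>x\<in>G - C. northN x \<notin> G \<and> snd x \<noteq> tS G"
proof (rule ccontr)
  assume no_exit: "\<not> ?thesis"
  obtain y ps where left_end: "(lS G, y) \<in> G" and ps: "simple_path_in G ps (lS G, y) (rS G, y)"
    using assms(2) unfolding has_connected_hbridge_def connected_in_def by blast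
  define s where "s = (lS G, y)"
  obtain c where c: "c \<in> C" "snd c = tS G" using assms(4) by blast
  have cG: "c \<in> G"
    using c(1) assms(3) by (auto simp: is_component_def connected_in_iff_rtranclp
        intro: grid_step_rtranclp_in)
  have below_top: "snd z \<le> tS G" if "z \<in> G" for z
    unfolding tS_def using assms(1) that by simp
  have outside_C: "z \<notin> C" if "(grid_step G)\<^sup>*\<^sup>* s z" for z
    using component_reach_closed[OF assms(3) _ grid_step_rtranclp_sym[OF that]] assms(5)
    by (auto simp: s_def)
  have north: "northN z \<in> G" if "(grid_step G)\<^sup>*\<^sup>* s z" "snd z < tS G" for z
    using no_exit outside_C[OF that(1)] grid_step_rtranclp_in[OF that(1)] left_end that(2)
    by (auto simp: s_def)
  have "lS G \<le> fst c" "fst c \<le> rS G"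
    unfolding lS_def rS_def using assms(1) cG by simp_all
  then obtain q where q: "q \<in> set ps" "fst q = fst c"
    using ps adj_chain_crosses_column[of ps "fst c"] by (auto simp: simple_path_in_def)
  have "(grid_step G)\<^sup>*\<^sup>* s q"
    using ps q adj_chain_reaches[of ps G q] by (auto simp: simple_path_in_def s_def)
  then have "(grid_step G)\<^sup>*\<^sup>* s (fst c, snd q)"
    using q(2) by (metis prod.collapse)
  moreover have "snd q \<le> tS G"
    using below_top[of q] q(1) ps by (auto simp: simple_path_in_def)
  ultimately have "(grid_step G)\<^sup>*\<^sup>* s (fst c, tS G)"
    using climb_column[of s G "tS G" "fst c" "snd q"] left_end north by (simp add: s_def)
  then have "(grid_step G)\<^sup>*\<^sup>* s c"
    using c(2) by (metis prod.collapse)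
  then show False using outside_C c(1) by blast
qed

end
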